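(* For each $n\geq1$, $x-1$ divides $T_{1,n}(x,y)$ and $(x-1)^2$ divides $T_{0,n}(x,y)$ in $\mathbb{Z}[x,y]$.
   Context: Graphs are finite; multiple edges are allowed. For a graph $G$, a spanning subgraph $A$ has vertex set $V(G)$ and edge set $E(A)\subseteq E(G)$; $k(A)$ is its number of connected components, $r(A)=|V(G)|-k(A)$, $n(A)=|E(A)|-r(A)$; the weight of $A$ is $(x-1)^{r(G)-r(A)}(y-1)^{n(A)}$. Sierpiński graphs $\Gamma_n$ ($n\ge1$), each with three outmost vertices top, left, right: $\Gamma_1$ is the triangle $K_3$ with its three vertices as top, left, right; $\Gamma_{n+1}$ is obtained from three disjoint copies $G_1,G_2,G_3$ of $\Gamma_n$ by identifying left$(G_1)$ with top$(G_2)$, right$(G_1)$ with top$(G_3)$, right$(G_2)$ with left$(G_3)$; its outmost vertices are top$(G_1)$, left$(G_2)$, right$(G_3)$. $T_{1,n}(x,y)$ is the sum of the weights (with $G=\Gamma_n$) of the spanning subgraphs of $\Gamma_n$ in which the left and right outmost vertices lie in the same component and the top one lies in a different component; $T_{0,n}(x,y)$ is the sum over spanning subgraphs in which the three outmost vertices lie in three distinct components. *)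

theory Defs
  imports "HOL-Computational_Algebra.Polynomial"
begin

text \<open>Gamma_(m+1) is the union of
  a copy of Gamma_m at the origin (G1), a copy translated by (2^(m-1),0) (G2) and a copy
  translated by (0,2^(m-1)) (G3); the identifications left(G1)=top(G2), right(G1)=top(G3),
  right(G2)=left(G3) are realised by coinciding coordinates.\<close>

type_synonym vert = "int \<times> int"

definition shift_edges :: "vert \<Rightarrow> vert set set \<Rightarrow> vert set set" where
  "shift_edges d E = (\<lambda>e. (\<lambda>v. (fst v + fst d, snd v + snd d)) ` e) ` E"

fun sier_edges :: "nat \<Rightarrow> vert set set" where
  "sier_edges 0 = {}"
| "sier_edges (Suc 0) = {{(0,0),(1,0)}, {(0,0),(0,1)}, {(1,0),(0,1)}}"
| "sier_edges (Suc (Suc n)) =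
     (let E = sier_edges (Suc n); L = (2::int) ^ n
      in E \<union> shift_edges (L,0) E \<union> shift_edges (0,L) E)"

definition sier_verts :: "nat \<Rightarrow> vert set" where
  "sier_verts n = \<Union> (sier_edges n)"

definition sier_top :: "nat \<Rightarrow> vert" where "sier_top n = (0,0)"
definition sier_left :: "nat \<Rightarrow> vert" where "sier_left n = ((2::int) ^ (n - 1), 0)"
definition sier_right :: "nat \<Rightarrow> vert" where "sier_right n = (0, (2::int) ^ (n - 1))"

definition connected_in :: "vert set set \<Rightarrow> vert \<Rightarrow> vert \<Rightarrow> bool" where
  "connected_in A u v \<longleftrightarrow> (u, v) \<in> {(a, b). {a, b} \<in> A}\<^sup>*"

definition num_components :: "vert set \<Rightarrow> vert set set \<Rightarrow> nat" where
  "num_components V A = card (V // {(u, v). u \<in> V \<and> v \<in> V \<and> connected_in A u v})"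

definition rank_sg :: "vert set \<Rightarrow> vert set set \<Rightarrow> nat" where
  "rank_sg V A = card V - num_components V A"

definition nullity_sg :: "vert set \<Rightarrow> vert set set \<Rightarrow> nat" where
  "nullity_sg V A = card A - rank_sg V A"

text \<open>Z[x,y] is represented as int poly poly: coefficients are polynomials in x, the outer
  variable is y.\<close>
definition px :: "int poly poly" where "px = [:[:0, 1:]:]"
definition py :: "int poly poly" where "py = [:0, 1:]"

definition weight :: "vert set \<Rightarrow> vert set set \<Rightarrow> vert set set \<Rightarrow> int poly poly" where
  "weight V E A = (px - 1) ^ (rank_sg V E - rank_sg V A) * (py - 1) ^ nullity_sg V A"

definition T1 :: "nat \<Rightarrow> int poly poly" where
  "T1 n = (\<Sum>A\<in>{A. A \<subseteq> sier_edges n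
                 \<and> connected_in A (sier_left n) (sier_right n)
                 \<and> \<not> connected_in A (sier_top n) (sier_left n)}.
             weight (sier_verts n) (sier_edges n) A)"

definition T0 :: "nat \<Rightarrow> int poly poly" where
  "T0 n = (\<Sum>A\<in>{A. A \<subseteq> sier_edges n
                 \<and> \<not> connected_in A (sier_left n) (sier_right n)
                 \<and> \<not> connected_in A (sier_top n) (sier_left n)
                 \<and> \<not> connected_in A (sier_top n) (sier_right n)}.
             weight (sier_verts n) (sier_edges n) A)"

end

theory Submission
  imports Defs
begin

(* Write k(A) for the number of components of the spanning subgraph with edge
   set A.  Since Gamma_n is connected, r(Gamma_n) - r(A) = k(A) - 1, so every weight is
   divisible by (x-1)^(k(A)-1).  Vertices that are pairwise disconnected in A lie in distinct
   components, so k(A) is at least their number.  In every subgraph counted by T_{1,n} the top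
   and left vertices are disconnected (k(A) >= 2), and in every subgraph counted by T_{0,n}
   all three outmost vertices are (k(A) >= 3); hence each summand, and therefore each sum,
   is divisible by (x-1) resp. (x-1)^2. *)

lemma connected_in_refl: "connected_in A u u"
  by (simp add: connected_in_def)

lemma connected_in_edge: "{a, b} \<in> A \<Longrightarrow> connected_in A a b"
  by (auto simp: connected_in_def)

lemma connected_in_trans:
  "connected_in A u v \<Longrightarrow> connected_in A v w \<Longrightarrow> connected_in A u w"
  unfolding connected_in_def using rtrancl_trans by fast

text \<open>The adjacency relation of an edge set of unordered pairs is symmetric.\<close>
lemma connected_in_sym: "connected_in A u v \<Longrightarrow> connected_in A v u"
proof -
  have sym_adj: "{(a, b). {a, b} \<in> A}\<inverse> = {(a, b). {a, b} \<in> A}"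
    by (auto simp: insert_commute)
  assume "connected_in A u v"
  hence "(v, u) \<in> ({(a, b). {a, b} \<in> A}\<inverse>)\<^sup>*"
    unfolding connected_in_def by (rule rtrancl_converseI)
  thus ?thesis unfolding connected_in_def sym_adj .
qed

lemma connected_in_mono: "connected_in A u v \<Longrightarrow> A \<subseteq> B \<Longrightarrow> connected_in B u v"
proof -
  assume "connected_in A u v" and "A \<subseteq> B"
  moreover have "{(a, b). {a, b} \<in> A} \<subseteq> {(a, b). {a, b} \<in> B}" using \<open>A \<subseteq> B\<close> by auto
  ultimately show ?thesis unfolding connected_in_def using rtrancl_mono by blast
qed

lemma connected_in_shift:
  assumes "connected_in A u v"
  shows "connected_in (shift_edges d A)
           (fst u + fst d, snd u + snd d) (fst v + fst d, snd v + snd d)"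
proof -
  have "(u, v) \<in> {(a, b). {a, b} \<in> A}\<^sup>*" using assms by (simp add: connected_in_def)
  thus ?thesis
  proof (induction rule: rtrancl_induct)
    case base
    show ?case by (rule connected_in_refl)
  next
    case (step y z)
    hence "{(fst y + fst d, snd y + snd d), (fst z + fst d, snd z + snd d)} \<in> shift_edges d A"
      unfolding shift_edges_def by (intro rev_image_eqI[of "{y, z}"]) auto
    thus ?case using step.IH connected_in_trans connected_in_edge by blast
  qed
qed

definition comp_rel :: "vert set \<Rightarrow> vert set set \<Rightarrow> vert rel" where
  "comp_rel V A = {(u, v). u \<in> V \<and> v \<in> V \<and> connected_in A u v}"

lemma num_components_comp_rel: "num_components V A = card (V // comp_rel V A)"
  by (simp add: num_components_def comp_rel_def)

lemma quotient_as_image: "V // r = (\<lambda>x. r `` {x}) ` V"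
  by (auto simp: quotient_def)

lemma num_components_le_card: "finite V \<Longrightarrow> num_components V A \<le> card V"
  unfolding num_components_comp_rel quotient_as_image by (rule card_image_le)

lemma card_le_num_components:
  assumes "finite V" and "S \<subseteq> V"
    and disc: "pairwise (\<lambda>a b. \<not> connected_in A a b) S"
  shows "card S \<le> num_components V A"
proof -
  let ?cls = "\<lambda>a. comp_rel V A `` {a}"
  have "inj_on ?cls S"
  proof (rule inj_onI)
    fix a b assume "a \<in> S" "b \<in> S" and same: "?cls a = ?cls b"
    have "a \<in> ?cls a" using \<open>a \<in> S\<close> \<open>S \<subseteq> V\<close> connected_in_refl by (auto simp: comp_rel_def)
    hence "connected_in A b a" using same by (auto simp: comp_rel_def)
    hence "connected_in A a b" by (rule connected_in_sym)
    thus "a = b" using disc \<open>a \<in> S\<close> \<open>b \<in> S\<close> by (auto simp: pairwise_def)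
  qed
  hence "card S = card (?cls ` S)" by (simp add: card_image)
  also have "\<dots> \<le> card (V // comp_rel V A)"
    using \<open>finite V\<close> \<open>S \<subseteq> V\<close> unfolding quotient_as_image by (intro card_mono) auto
  finally show ?thesis by (simp add: num_components_comp_rel)
qed

lemma num_components_connected:
  assumes "r \<in> V" and reach: "\<forall>v\<in>V. connected_in A r v"
  shows "num_components V A = 1"
proof -
  have "comp_rel V A `` {u} = V" if "u \<in> V" for u
    using that reach by (auto simp: comp_rel_def intro: connected_in_trans connected_in_sym)
  hence "V // comp_rel V A = {V}" unfolding quotient_as_image using \<open>r \<in> V\<close> by auto
  thus ?thesis by (simp add: num_components_comp_rel)
qed

text \<open>For a connected graph G the exponent of (x-1) in the weight of A is k(A) - 1, so k
  pairwise disconnected vertices force the factor (x-1)^(k-1).\<close>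
lemma weight_dvd:
  assumes "finite V" and "num_components V E = 1"
    and "S \<subseteq> V" and "pairwise (\<lambda>a b. \<not> connected_in A a b) S"
  shows "(px - 1) ^ (card S - 1) dvd weight V E A"
proof -
  have "card S \<le> num_components V A"
    using card_le_num_components assms by blast
  moreover have "num_components V A \<le> card V"
    using num_components_le_card[OF \<open>finite V\<close>] .
  ultimately have "card S - 1 \<le> rank_sg V E - rank_sg V A"
    using assms(2) unfolding rank_sg_def by linarith
  hence "(px - 1) ^ (card S - 1) dvd (px - 1) ^ (rank_sg V E - rank_sg V A)"
    by (rule le_imp_power_dvd)
  thus ?thesis unfolding weight_def by (rule dvd_mult2)
qed

lemma finite_sier_edges: "finite (sier_edges n) \<and> (\<forall>e\<in>sier_edges n. finite e)"
  by (induction n rule: sier_edges.induct) (auto simp: Let_def shift_edges_def)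

lemma finite_sier_verts: "finite (sier_verts n)"
  using finite_sier_edges[of n] by (auto simp: sier_verts_def)

lemma vertices_three_copies:
  "\<Union> (E \<union> shift_edges (L, 0) E \<union> shift_edges (0, L) E) =
     \<Union>E \<union> (\<lambda>v. (fst v + L, snd v)) ` \<Union>E \<union> (\<lambda>v. (fst v, snd v + L)) ` \<Union>E"
  unfolding shift_edges_def by auto

text \<open>Gamma_(m+1) is connected (every vertex is reachable from the top), and its three
  outmost vertices are vertices.  The inductive step joins the copies G2 and G3 to G1 at
  left(G1) and right(G1).\<close>
lemma sier_connected_and_outmost:
  "(\<forall>v\<in>sier_verts (Suc m). connected_in (sier_edges (Suc m)) (0, 0) v) \<and>
   (0, 0) \<in> sier_verts (Suc m) \<and>
   ((2::int) ^ m, 0) \<in> sier_verts (Suc m) \<and>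
   (0, (2::int) ^ m) \<in> sier_verts (Suc m)"
proof (induction m)
  case 0
  have "sier_verts (Suc 0) = {(0, 0), (1, 0), (0, 1)}" by (auto simp: sier_verts_def)
  thus ?case by (auto intro: connected_in_refl connected_in_edge)
next
  case (Suc m)
  define E where "E = sier_edges (Suc m)"
  define L where "L = (2::int) ^ m"
  define F where "F = sier_edges (Suc (Suc m))"
  have reach: "\<forall>v\<in>\<Union>E. connected_in E (0, 0) v"
    and top: "(0, 0) \<in> \<Union>E" and left: "(L, 0) \<in> \<Union>E" and right: "(0, L) \<in> \<Union>E"
    using Suc.IH unfolding E_def L_def sier_verts_def by blast+
  have F_eq: "F = E \<union> shift_edges (L, 0) E \<union> shift_edges (0, L) E"
    by (simp add: F_def E_def L_def Let_def)
  hence verts_F: "\<Union>F = \<Union>E \<union> (\<lambda>v. (fst v + L, snd v)) ` \<Union>E \<union> (\<lambda>v. (fst v, snd v + L)) ` \<Union>E"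
    using vertices_three_copies by simp
  have reach_copy: "connected_in F (fst d, snd d) (fst w + fst d, snd w + snd d)"
    if "w \<in> \<Union>E" "d \<in> {(0, 0), (L, 0), (0, L)}" for w d
  proof -
    have "connected_in E (0, 0) w" using reach that(1) by blast
    hence "connected_in (shift_edges d E) (fst d, snd d) (fst w + fst d, snd w + snd d)"
      using connected_in_shift[of E "(0, 0)" w d] by simp
    moreover have "shift_edges d E \<subseteq> F"
    proof (cases "d = (0, 0)")
      case True
      have "shift_edges (0, 0) E = E" by (simp add: shift_edges_def)
      thus ?thesis using True F_eq by auto
    next
      case False
      thus ?thesis using that(2) F_eq by auto
    qed
    ultimately show ?thesis by (rule connected_in_mono)
  qed
  have "connected_in F (0, 0) v" if "v \<in> \<Union>F" for v
  proof -
    from that consider "v \<in> \<Union>E"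
      | w where "w \<in> \<Union>E" "v = (fst w + L, snd w)"
      | w where "w \<in> \<Union>E" "v = (fst w, snd w + L)"
      unfolding verts_F by blast
    thus ?thesis
    proof cases
      case 1
      thus ?thesis using reach_copy[of v "(0, 0)"] by simp
    next
      case (2 w)
      thus ?thesis using reach_copy[OF left, of "(0, 0)"] reach_copy[of w "(L, 0)"]
        by (auto intro: connected_in_trans)
    next
      case (3 w)
      thus ?thesis using reach_copy[OF right, of "(0, 0)"] reach_copy[of w "(0, L)"]
        by (auto intro: connected_in_trans)
    qed
  qed
  moreover have "(0, 0) \<in> \<Union>F" unfolding verts_F using top by blast
  moreover have "(L + L, 0) \<in> \<Union>F"
    unfolding verts_F using rev_image_eqI[OF left, of _ "\<lambda>v. (fst v + L, snd v)"] by simp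
  moreover have "(0, L + L) \<in> \<Union>F"
    unfolding verts_F using rev_image_eqI[OF right, of _ "\<lambda>v. (fst v, snd v + L)"] by simp
  moreover have "L + L = 2 ^ Suc m" by (simp add: L_def)
  ultimately show ?case unfolding F_def sier_verts_def by simp
qed

lemma sier_weight_dvd:
  assumes "n \<ge> 1"
    and "S \<subseteq> {sier_top n, sier_left n, sier_right n}"
    and "pairwise (\<lambda>a b. \<not> connected_in A a b) S"
  shows "(px - 1) ^ (card S - 1) dvd weight (sier_verts n) (sier_edges n) A"
proof -
  obtain m where n: "n = Suc m" using assms(1) by (cases n) auto
  note props = sier_connected_and_outmost[of m]
  have "num_components (sier_verts n) (sier_edges n) = 1"
    using props n by (intro num_components_connected[of "(0, 0)"]) auto
  moreover have "S \<subseteq> sier_verts n"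
    using assms(2) props n by (auto simp: sier_top_def sier_left_def sier_right_def)
  ultimately show ?thesis using weight_dvd finite_sier_verts assms(3) by blast
qed

theorem lemma3p3:
  fixes n :: nat
  assumes "n \<ge> 1"
  shows "(px - 1) dvd T1 n \<and> (px - 1) ^ 2 dvd T0 n"
proof
  have distinct: "sier_top n \<noteq> sier_left n" "sier_top n \<noteq> sier_right n"
    "sier_left n \<noteq> sier_right n"
    by (simp_all add: sier_top_def sier_left_def sier_right_def)
  show "(px - 1) dvd T1 n"
    unfolding T1_def
  proof (rule dvd_sum)
    fix A assume "A \<in> {A. A \<subseteq> sier_edges n \<and> connected_in A (sier_left n) (sier_right n)
                          \<and> \<not> connected_in A (sier_top n) (sier_left n)}"
    hence "pairwise (\<lambda>a b. \<not> connected_in A a b) {sier_top n, sier_left n}"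
      by (auto simp: pairwise_insert dest: connected_in_sym)
    from sier_weight_dvd[OF assms _ this] distinct
    show "(px - 1) dvd weight (sier_verts n) (sier_edges n) A" by simp
  qed
  show "(px - 1) ^ 2 dvd T0 n"
    unfolding T0_def
  proof (rule dvd_sum)
    fix A assume "A \<in> {A. A \<subseteq> sier_edges n \<and> \<not> connected_in A (sier_left n) (sier_right n)
                          \<and> \<not> connected_in A (sier_top n) (sier_left n)
                          \<and> \<not> connected_in A (sier_top n) (sier_right n)}"
    hence "pairwise (\<lambda>a b. \<not> connected_in A a b) {sier_top n, sier_left n, sier_right n}"
      by (auto simp: pairwise_insert dest: connected_in_sym)
    from sier_weight_dvd[OF assms _ this] distinct
    show "(px - 1) ^ 2 dvd weight (sier_verts n) (sier_edges n) A" by (simp add: power2_eq_square)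
  qed
qed

end
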